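(* Consider the patient model in the context with actions from an $(r,k)$-exploratory policy. Fix $i\in\{1,\dots,M\}$, let $N_i:=\sum_{t=1}^T\mathbf 1_{\{u_t=e_i\}}$, $\underline p:=\sigma(-C_x-\bar\mu)$ with $C_x:=\frac{\bar b+\bar c+\bar w}{1-\bar a}$, and let $\hat\mu_i:=\arg\max_{\mu_i\in[-\bar\mu,\bar\mu]}\sum_{t=1}^T\mathbf 1_{\{u_t=e_i\}}[d^i_t\log\sigma(x_t+\mu_i)+(1-d^i_t)\log(1-\sigma(x_t+\mu_i))]$. Then for $\delta\in(0,1)$, $$\mathbf P\Big(|\hat\mu_i-\mu^*_i|\leq\frac{\sqrt{2T\log(2/\delta)}}{N_i\underline p^2}\Big)\geq1-\delta.$$
   Context: Patient model: $M\geq1$ treatments; $\mathcal U:=\{v\in\{0,1\}^M:\|v\|_0\leq1\}$, $e_i$ basis vectors. $x_{t+1}=ax_t+b^\top u_t+c^\top d_t+w_t$, adherence $d^i_t\mid x_t,u^i_t\sim\mathrm{Bernoulli}(u^i_t\sigma(x_t+\mu^*_i))$, $\sigma$ the sigmoid; $x_1$ distributed as the noise. Parameters $a\in[0,\bar a]$ (known $\bar a\in(0,1)$), $\|b\|_\infty\leq\bar b$, $\|c\|_\infty\leq\bar c$, true shifts $\mu^*\in[-\bar\mu,\bar\mu]^M$ ($\bar\mu>0$ known). $x_t,u_t,d_t$ fully observed. Noise i.i.d., zero-symmetric, $\sigma_s^2$-subgaussian, $|w_t|\leq\bar w$ ($\bar w>0$), log-concave density, known variance $\sigma_w^2>0$.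 With $\mathcal F_t:=\sigma(x_{0:t},u_{0:t},d_{0:t},w_{0:t})$, an $(r,k)$-exploratory policy ($r\in(0,1]$, $k\in\mathbb N$) is one that in every block $\{j+1,\dots,j+k\}$, $j\geq0$, almost surely takes at least $\lceil rk\rceil$ actions drawn uniformly from $\mathcal U$ independently of $\mathcal F_{t-1}$. If $N_i=0$ the bound is interpreted as $+\infty$. *)

theory Defs
  imports "HOL-Probability.Probability"
begin

definition sigmoid :: "real \<Rightarrow> real" where
  "sigmoid z = 1 / (1 + exp (- z))"

text \<open>Basis vector e_i (0-based index i; components indexed by nat, zero outside).\<close>
definition basis_vec :: "nat \<Rightarrow> nat \<Rightarrow> real" where
  "basis_vec i = (\<lambda>j. if j = i then 1 else 0)"

definition action_set :: "nat \<Rightarrow> (nat \<Rightarrow> real) set" where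
  "action_set M = {v. (\<forall>j. v j \<in> {0,1}) \<and> (\<forall>j\<ge>M. v j = 0) \<and> card {j. v j \<noteq> 0} \<le> 1}"

definition gen_sigma :: "'a measure \<Rightarrow> ('a \<Rightarrow> real) set \<Rightarrow> 'a set set" where
  "gen_sigma P Xs = sigma_sets (space P) (\<Union>X\<in>Xs. {X -` B \<inter> space P | B. B \<in> sets borel})"

text \<open>Generators of F_t = sigma(x_{1:t}, u_{1:t}, d_{1:t}, w_{1:t}); F_0 is trivial.\<close>
definition hist_vars ::
  "nat \<Rightarrow> (nat \<Rightarrow> 'a \<Rightarrow> real) \<Rightarrow> (nat \<Rightarrow> 'a \<Rightarrow> nat \<Rightarrow> real) \<Rightarrow> (nat \<Rightarrow> 'a \<Rightarrow> nat \<Rightarrow> real)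
   \<Rightarrow> (nat \<Rightarrow> 'a \<Rightarrow> real) \<Rightarrow> nat \<Rightarrow> ('a \<Rightarrow> real) set" where
  "hist_vars M x u d w t =
     {x s | s. 1 \<le> s \<and> s \<le> t}
   \<union> {(\<lambda>\<omega>. u s \<omega> j) | s j. 1 \<le> s \<and> s \<le> t \<and> j < M}
   \<union> {(\<lambda>\<omega>. d s \<omega> j) | s j. 1 \<le> s \<and> s \<le> t \<and> j < M}
   \<union> {w s | s. 1 \<le> s \<and> s \<le> t}"

definition past_vars ::
  "nat \<Rightarrow> (nat \<Rightarrow> 'a \<Rightarrow> real) \<Rightarrow> (nat \<Rightarrow> 'a \<Rightarrow> nat \<Rightarrow> real) \<Rightarrow> (nat \<Rightarrow> 'a \<Rightarrow> nat \<Rightarrow> real)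
   \<Rightarrow> (nat \<Rightarrow> 'a \<Rightarrow> real) \<Rightarrow> nat \<Rightarrow> ('a \<Rightarrow> real) set" where
  "past_vars M x u d w t = hist_vars M x u d w (t - 1) \<union> {x t}"

definition log_concave :: "(real \<Rightarrow> real) \<Rightarrow> bool" where
  "log_concave f \<longleftrightarrow> (\<forall>y z \<theta>. 0 < \<theta> \<and> \<theta> < 1 \<longrightarrow>
      f y powr \<theta> * f z powr (1 - \<theta>) \<le> f (\<theta> * y + (1 - \<theta>) * z))"

definition count_treat :: "(nat \<Rightarrow> 'a \<Rightarrow> nat \<Rightarrow> real) \<Rightarrow> nat \<Rightarrow> nat \<Rightarrow> 'a \<Rightarrow> real" where
  "count_treat u T i \<omega> = (\<Sum>t=1..T. if u t \<omega> = basis_vec i then 1 else 0)"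

definition loglik ::
  "(nat \<Rightarrow> 'a \<Rightarrow> real) \<Rightarrow> (nat \<Rightarrow> 'a \<Rightarrow> nat \<Rightarrow> real) \<Rightarrow> (nat \<Rightarrow> 'a \<Rightarrow> nat \<Rightarrow> real)
   \<Rightarrow> nat \<Rightarrow> nat \<Rightarrow> 'a \<Rightarrow> real \<Rightarrow> real" where
  "loglik x u d T i \<omega> m = (\<Sum>t=1..T. (if u t \<omega> = basis_vec i then 1 else 0) *
      (d t \<omega> i * ln (sigmoid (x t \<omega> + m)) + (1 - d t \<omega> i) * ln (1 - sigmoid (x t \<omega> + m))))"

end

theory Submission
  imports Defs
begin

text \<open>
  The log-likelihood of treatment \<open>i\<close> is concave in the shift \<open>\<mu>\<close>, with derivative
  (the score) \<open>\<Sum>\<^sub>t 1{u\<^sub>t = e\<^sub>i} (d\<^sub>t\<^sup>i - \<sigma>(x\<^sub>t + \<mu>))\<close>.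
  The state stays almost surely in \<open>[-C\<^sub>x, C\<^sub>x]\<close>, so on every treated step the
  sigmoid has slope at least \<open>p\<^sup>2\<close>, where \<open>p = \<sigma>(-C\<^sub>x - mubar)\<close>. The score is
  therefore strongly decreasing, and the first-order condition at the maximiser \<open>muhat\<close>
  gives \<open>N\<^sub>i p\<^sup>2 |muhat - \<mu>\<^sup>*\<^sub>i| \<le> |score(\<mu>\<^sup>*\<^sub>i)|\<close>.
  Since the adherence has conditional mean \<open>u\<^sub>t\<^sup>i \<sigma>(x\<^sub>t + \<mu>\<^sup>*\<^sub>i)\<close> given the
  past, the state and the action, the score at \<open>\<mu>\<^sup>*\<^sub>i\<close> is a sum of \<open>T\<close> martingale
  differences bounded by 1, and the Azuma--Hoeffding inequality bounds it by
  \<open>\<surd>(2 T log(2/\<delta>))\<close> with probability at least \<open>1 - \<delta>\<close>.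
\<close>

section \<open>The sigmoid\<close>

lemma sigmoid_pos: "0 < sigmoid z"
  unfolding sigmoid_def by (simp add: add_pos_pos)

lemma sigmoid_less_1: "sigmoid z < 1"
  unfolding sigmoid_def by (simp add: add_pos_pos)

lemma one_minus_sigmoid: "1 - sigmoid z = sigmoid (- z)"
proof -
  have "0 < 1 + exp z" "0 < 1 + exp (- z)" "exp (- z) * exp z = 1"
    by (simp_all add: add_pos_pos exp_minus)
  then show ?thesis unfolding sigmoid_def by (simp add: field_simps)
qed

lemma sigmoid_strict_mono: "a < b \<Longrightarrow> sigmoid a < sigmoid b"
  unfolding sigmoid_def by (simp add: add_pos_pos frac_less2)

lemma sigmoid_mono: "a \<le> b \<Longrightarrow> sigmoid a \<le> sigmoid b"
  using sigmoid_strict_mono[of a b] by (cases "a = b") auto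

lemma sigmoid_measurable [measurable]: "sigmoid \<in> borel_measurable borel"
  unfolding sigmoid_def[abs_def] by measurable

lemma sigmoid_has_real_derivative:
  "(sigmoid has_real_derivative sigmoid z * (1 - sigmoid z)) (at z)"
proof -
  have pos: "0 < 1 + exp (- z)" by (simp add: add_pos_pos)
  have "((\<lambda>z. 1 / (1 + exp (- z))) has_real_derivative exp (- z) / (1 + exp (- z))\<^sup>2) (at z)"
    using pos by (auto intro!: derivative_eq_intros simp: power2_eq_square)
  moreover have "exp (- z) / (1 + exp (- z))\<^sup>2 = sigmoid z * (1 - sigmoid z)"
    using pos unfolding sigmoid_def by (simp add: field_simps power2_eq_square)
  ultimately show ?thesis unfolding sigmoid_def[abs_def] by simp
qed

lemma sigmoid_derivative_lower_bound:
  assumes "\<bar>z\<bar> \<le> K"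
  shows "(sigmoid (- K))\<^sup>2 \<le> sigmoid z * (1 - sigmoid z)"
proof -
  have "sigmoid (- K) \<le> sigmoid z" "sigmoid (- K) \<le> 1 - sigmoid z"
    using assms unfolding one_minus_sigmoid by (auto intro: sigmoid_mono)
  then show ?thesis
    unfolding power2_eq_square using sigmoid_pos[of "- K"] by (intro mult_mono) auto
qed

lemma sigmoid_strongly_monotone:
  assumes "\<bar>a\<bar> \<le> K" "\<bar>b\<bar> \<le> K"
  shows "(sigmoid (- K))\<^sup>2 * (a - b)\<^sup>2 \<le> (sigmoid a - sigmoid b) * (a - b)"
proof -
  have ordered: "(sigmoid (- K))\<^sup>2 * (a - b)\<^sup>2 \<le> (sigmoid a - sigmoid b) * (a - b)"
    if "b < a" "\<bar>a\<bar> \<le> K" "\<bar>b\<bar> \<le> K" for a b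
  proof -
    obtain z where z: "b < z" "z < a"
      and mvt: "sigmoid a - sigmoid b = (a - b) * (sigmoid z * (1 - sigmoid z))"
      using MVT2[of b a sigmoid "\<lambda>z. sigmoid z * (1 - sigmoid z)"] \<open>b < a\<close>
        sigmoid_has_real_derivative by blast
    have "(sigmoid (- K))\<^sup>2 \<le> sigmoid z * (1 - sigmoid z)"
      using z that by (intro sigmoid_derivative_lower_bound) auto
    from mult_right_mono[OF this, of "(a - b)\<^sup>2"] show ?thesis
      unfolding mvt by (simp add: power2_eq_square mult_ac)
  qed
  show ?thesis
  proof (cases a b rule: linorder_cases)
    case greater
    then show ?thesis using ordered assms by blast
  next
    case less
    then show ?thesis
      using ordered[where a = b and b = a] assms by (simp add: power2_commute algebra_simps)
  qed simp
qed

section \<open>Maximum likelihood in the logistic model\<close>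

lemma bernoulli_loglik_has_real_derivative:
  "((\<lambda>m. y * ln (sigmoid (z + m)) + (1 - y) * ln (1 - sigmoid (z + m)))
     has_real_derivative y - sigmoid (z + m)) (at m)"
proof -
  let ?s = "sigmoid (z + m)"
  have "((\<lambda>m. z + m) has_real_derivative 1) (at m)"
    by (auto intro!: derivative_eq_intros)
  from DERIV_chain2[OF sigmoid_has_real_derivative this]
  have "((\<lambda>m. sigmoid (z + m)) has_real_derivative ?s * (1 - ?s)) (at m)"
    by simp
  then have "((\<lambda>m. y * ln (sigmoid (z + m)) + (1 - y) * ln (1 - sigmoid (z + m)))
     has_real_derivative y * (?s * (1 - ?s) / ?s) + (1 - y) * (- (?s * (1 - ?s)) / (1 - ?s))) (at m)"
    using sigmoid_pos[of "z + m"] sigmoid_less_1[of "z + m"]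
    by (auto intro!: derivative_eq_intros)
  moreover have "y * (?s * (1 - ?s) / ?s) + (1 - y) * (- (?s * (1 - ?s)) / (1 - ?s)) = y - ?s"
    using sigmoid_pos[of "z + m"] sigmoid_less_1[of "z + m"] by (simp add: field_simps)
  ultimately show ?thesis by simp
qed

lemma argmax_derivative_sign:
  fixes f f' :: "real \<Rightarrow> real"
  assumes deriv: "\<And>m. (f has_real_derivative f' m) (at m)"
    and mu: "mu \<in> {lo..hi}" and argmax: "\<forall>m\<in>{lo..hi}. f m \<le> f mu" and m: "m \<in> {lo..hi}"
  shows "f' mu * (m - mu) \<le> 0"
proof (rule ccontr)
  assume "\<not> ?thesis"
  then have pos: "0 < f' mu * (m - mu)" by simp
  define g where "g h = f (mu + h * (m - mu))" for h
  have "((\<lambda>h. mu + h * (m - mu)) has_real_derivative m - mu) (at 0)"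
    by (auto intro!: derivative_eq_intros)
  from DERIV_chain2[OF deriv this]
  have "(g has_real_derivative f' mu * (m - mu)) (at 0)"
    unfolding g_def by simp
  then obtain e where "0 < e" and incr: "\<And>h. 0 < h \<Longrightarrow> h < e \<Longrightarrow> g 0 < g h"
    using DERIV_pos_inc_right[OF _ pos] by (metis add_0)
  define h where "h = min (e / 2) 1"
  have "0 < h" "h < e" "h \<le> 1" using \<open>0 < e\<close> by (auto simp: h_def)
  have "mu + h * (m - mu) = (1 - h) * mu + h * m" by (simp add: algebra_simps)
  then have "mu + h * (m - mu) \<in> {lo..hi}"
    using mu m \<open>0 < h\<close> \<open>h \<le> 1\<close> convex_real_interval(5)[of lo hi]
    by (auto simp: convex_alt)
  then show False
    using incr[OF \<open>0 < h\<close> \<open>h < e\<close>] argmax by (fastforce simp: g_def)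
qed

definition logistic_loglik ::
  "nat \<Rightarrow> (nat \<Rightarrow> real) \<Rightarrow> (nat \<Rightarrow> real) \<Rightarrow> (nat \<Rightarrow> real) \<Rightarrow> real \<Rightarrow> real" where
  "logistic_loglik T c y z m =
     (\<Sum>t=1..T. c t * (y t * ln (sigmoid (z t + m)) + (1 - y t) * ln (1 - sigmoid (z t + m))))"

definition logistic_score ::
  "nat \<Rightarrow> (nat \<Rightarrow> real) \<Rightarrow> (nat \<Rightarrow> real) \<Rightarrow> (nat \<Rightarrow> real) \<Rightarrow> real \<Rightarrow> real" where
  "logistic_score T c y z m = (\<Sum>t=1..T. c t * (y t - sigmoid (z t + m)))"

lemma logistic_loglik_has_real_derivative:
  "(logistic_loglik T c y z has_real_derivative logistic_score T c y z m) (at m)"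
  unfolding logistic_loglik_def[abs_def] logistic_score_def
  by (intro DERIV_sum DERIV_cmult bernoulli_loglik_has_real_derivative)

lemma logistic_score_diff:
  "logistic_score T c y z a - logistic_score T c y z b =
     (\<Sum>t=1..T. c t * (sigmoid (z t + b) - sigmoid (z t + a)))"
  unfolding logistic_score_def sum_subtractf[symmetric] by (intro sum.cong) (auto simp: algebra_simps)

lemma logistic_score_antimono:
  assumes "\<forall>t. 0 \<le> c t" and "a \<le> b"
  shows "logistic_score T c y z b \<le> logistic_score T c y z a"
proof -
  have "0 \<le> (\<Sum>t=1..T. c t * (sigmoid (z t + b) - sigmoid (z t + a)))"
    using assms by (intro sum_nonneg mult_nonneg_nonneg) (auto intro: sigmoid_mono)
  then show ?thesis using logistic_score_diff[of T c y z a b] by linarith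
qed

lemma logistic_score_strict_antimono:
  assumes "\<forall>t. 0 \<le> c t" and "t0 \<in> {1..T}" "0 < c t0" and "a < b"
  shows "logistic_score T c y z b < logistic_score T c y z a"
proof -
  have "0 < (\<Sum>t=1..T. c t * (sigmoid (z t + b) - sigmoid (z t + a)))"
  proof (rule sum_pos2[OF _ \<open>t0 \<in> {1..T}\<close>])
    show "0 < c t0 * (sigmoid (z t0 + b) - sigmoid (z t0 + a))"
      using assms by (simp add: sigmoid_strict_mono)
    show "0 \<le> c t * (sigmoid (z t + b) - sigmoid (z t + a))" for t
      using assms by (intro mult_nonneg_nonneg) (auto intro: sigmoid_mono)
  qed simp
  then show ?thesis using logistic_score_diff[of T c y z a b] by linarith
qed

text \<open>Strong monotonicity of the score on the range of the treated states, compared with the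
  first-order condition at the maximiser.\<close>
lemma logistic_mle_error_bound:
  assumes c: "\<forall>t. 0 \<le> c t" and z: "\<forall>t\<in>{1..T}. c t \<noteq> 0 \<longrightarrow> \<bar>z t\<bar> \<le> C"
    and ms: "ms \<in> {-mb..mb}" and mh: "mh \<in> {-mb..mb}"
    and argmax: "\<forall>m\<in>{-mb..mb}. logistic_loglik T c y z m \<le> logistic_loglik T c y z mh"
  shows "(\<Sum>t=1..T. c t) * (sigmoid (- C - mb))\<^sup>2 * \<bar>mh - ms\<bar> \<le> \<bar>logistic_score T c y z ms\<bar>"
proof -
  define D where "D = mh - ms"
  define p2 where "p2 = (sigmoid (- C - mb))\<^sup>2"
  have term_le: "c t * p2 * D\<^sup>2 \<le> c t * ((sigmoid (z t + mh) - sigmoid (z t + ms)) * D)"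
    if "t \<in> {1..T}" for t
  proof (cases "c t = 0")
    case False
    then have "\<bar>z t + mh\<bar> \<le> C + mb" "\<bar>z t + ms\<bar> \<le> C + mb"
      using z that ms mh by auto
    from sigmoid_strongly_monotone[OF this]
    have "p2 * D\<^sup>2 \<le> (sigmoid (z t + mh) - sigmoid (z t + ms)) * D"
      by (simp add: p2_def D_def)
    then show ?thesis using c by (simp add: mult_left_mono mult.assoc)
  qed simp
  have "(\<Sum>t=1..T. c t) * p2 * D\<^sup>2 = (\<Sum>t=1..T. c t * p2 * D\<^sup>2)"
    by (simp add: sum_distrib_right)
  also have "\<dots> \<le> (\<Sum>t=1..T. c t * ((sigmoid (z t + mh) - sigmoid (z t + ms)) * D))"
    by (intro sum_mono term_le)
  also have "\<dots> = (logistic_score T c y z ms - logistic_score T c y z mh) * D"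
    unfolding logistic_score_diff by (simp add: sum_distrib_left sum_distrib_right mult_ac)
  also have "\<dots> \<le> logistic_score T c y z ms * D"
    using argmax_derivative_sign[OF logistic_loglik_has_real_derivative mh argmax ms]
    by (simp add: D_def algebra_simps)
  also have "\<dots> \<le> \<bar>logistic_score T c y z ms\<bar> * \<bar>D\<bar>"
    by (simp add: abs_mult[symmetric])
  finally have "((\<Sum>t=1..T. c t) * p2 * \<bar>D\<bar>) * \<bar>D\<bar> \<le> \<bar>logistic_score T c y z ms\<bar> * \<bar>D\<bar>"
    by (simp add: power2_eq_square mult.assoc)
  then show ?thesis
    by (cases "D = 0") (auto simp: D_def p2_def c sum_nonneg)
qed

lemma logistic_mle_le_iff:
  assumes c: "\<forall>t. 0 \<le> c t" "t0 \<in> {1..T}" "0 < c t0"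
    and mh: "mh \<in> {lo..hi}"
    and argmax: "\<forall>m\<in>{lo..hi}. logistic_loglik T c y z m \<le> logistic_loglik T c y z mh"
    and q: "lo \<le> q" "q < hi"
  shows "mh \<le> q \<longleftrightarrow> logistic_score T c y z q \<le> 0"
proof
  assume "mh \<le> q"
  have "logistic_score T c y z mh * (hi - mh) \<le> 0"
    using argmax_derivative_sign[OF logistic_loglik_has_real_derivative mh argmax] mh by auto
  then have "logistic_score T c y z mh \<le> 0"
    using \<open>mh \<le> q\<close> q by (simp add: mult_le_0_iff)
  then show "logistic_score T c y z q \<le> 0"
    using logistic_score_antimono[OF c(1) \<open>mh \<le> q\<close>, where T = T and y = y and z = z]
    by linarith
next
  assume score: "logistic_score T c y z q \<le> 0"
  show "mh \<le> q"
  proof (rule ccontr)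
    assume "\<not> mh \<le> q"
    then have "q < mh" by simp
    have "logistic_score T c y z mh * (q - mh) \<le> 0"
      using argmax_derivative_sign[OF logistic_loglik_has_real_derivative mh argmax] q by auto
    moreover have "logistic_score T c y z mh < logistic_score T c y z q"
      using logistic_score_strict_antimono[OF c \<open>q < mh\<close>] .
    ultimately show False using score \<open>q < mh\<close> by (simp add: mult_le_0_iff)
  qed
qed

section \<open>The Azuma--Hoeffding inequality\<close>

text \<open>Hoeffding's lemma for a fair \<open>\<plusminus>1\<close> variable.\<close>
lemma cosh_le_exp_square: "cosh (l :: real) \<le> exp (l\<^sup>2 / 2)"
proof -
  define h where "h = \<bar>l\<bar>"
  have "1 + 1 / 2 * (exp (2 * h) - 1) = exp h * cosh h"
    by (simp add: cosh_field_def exp_minus field_simps flip: exp_add)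
  then have "- (2 * h) * (1 / 2) + ln (exp h * cosh h) \<le> (2 * h)\<^sup>2 / 8"
    using Hoeffdings_lemma_aux[of "2 * h" "1 / 2"] by (simp add: h_def)
  then have "ln (cosh h) \<le> l\<^sup>2 / 2"
    by (simp add: ln_mult h_def power2_eq_square)
  then have "cosh h \<le> exp (l\<^sup>2 / 2)"
    by (metis cosh_real_pos exp_le_cancel_iff exp_ln)
  then show ?thesis by (cases "0 \<le> l") (auto simp: h_def)
qed

lemma exp_le_cosh_plus_sinh:
  fixes l x :: real
  assumes "\<bar>x\<bar> \<le> 1"
  shows "exp (l * x) \<le> cosh l + x * sinh l"
proof -
  define t where "t = (1 + x) / 2"
  have "0 \<le> t" "t \<le> 1" using assms by (auto simp: t_def)
  from convex_onD[OF exp_convex this, of "- l" l]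
  have "exp ((1 - t) * (- l) + t * l) \<le> (1 - t) * exp (- l) + t * exp l"
    by simp
  moreover have "(1 - t) * (- l) + t * l = l * x" by (simp add: t_def field_simps)
  moreover have "(1 - t) * exp (- l) + t * exp l = cosh l + x * sinh l"
    by (simp add: t_def cosh_field_def sinh_field_def field_simps)
  ultimately show ?thesis by simp
qed

lemma exp_mult_sum_le:
  fixes x :: "nat \<Rightarrow> real"
  assumes "\<And>t. t \<in> {1..n} \<Longrightarrow> \<bar>x t\<bar> \<le> 1"
  shows "exp (l * (\<Sum>t=1..n. x t)) \<le> exp (\<bar>l\<bar> * n)"
proof -
  have "\<bar>\<Sum>t=1..n. x t\<bar> \<le> (\<Sum>t=1..n. 1)"
    using assms by (intro order.trans[OF sum_abs sum_mono]) auto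
  then have "\<bar>\<Sum>t=1..n. x t\<bar> \<le> n" by simp
  have "l * (\<Sum>t=1..n. x t) \<le> \<bar>l\<bar> * \<bar>\<Sum>t=1..n. x t\<bar>"
    by (simp add: abs_mult[symmetric])
  also have "\<dots> \<le> \<bar>l\<bar> * n"
    using \<open>\<bar>\<Sum>t=1..n. x t\<bar> \<le> n\<close> by (intro mult_left_mono) auto
  finally show ?thesis by simp
qed

lemma integrable_mult_abs_le_1:
  fixes f g :: "'a \<Rightarrow> real"
  assumes "integrable M f" "g \<in> borel_measurable M" "\<And>\<omega>. \<omega> \<in> space M \<Longrightarrow> \<bar>g \<omega>\<bar> \<le> 1"
  shows "integrable M (\<lambda>\<omega>. f \<omega> * g \<omega>)"
proof (rule Bochner_Integration.integrable_bound[OF assms(1)])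
  show "(\<lambda>\<omega>. f \<omega> * g \<omega>) \<in> borel_measurable M"
    using assms(1,2) by measurable
  show "AE \<omega> in M. norm (f \<omega> * g \<omega>) \<le> norm (f \<omega>)"
    using assms(3) by (auto intro!: AE_I2 simp: abs_mult mult_left_le)
qed

context prob_space
begin

lemma integrable_bounded_borel:
  fixes f :: "'a \<Rightarrow> real"
  assumes "f \<in> borel_measurable M" "\<And>\<omega>. \<omega> \<in> space M \<Longrightarrow> \<bar>f \<omega>\<bar> \<le> B"
  shows "integrable M f"
  using assms by (intro integrable_const_bound[where B = B]) (auto intro!: AE_I2)

lemma integrable_exp_bounded_sum:
  fixes X :: "nat \<Rightarrow> 'a \<Rightarrow> real"
  assumes "\<And>t. t \<in> {1..n} \<Longrightarrow> X t \<in> borel_measurable M"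
    and "\<And>t \<omega>. t \<in> {1..n} \<Longrightarrow> \<omega> \<in> space M \<Longrightarrow> \<bar>X t \<omega>\<bar> \<le> 1"
  shows "integrable M (\<lambda>\<omega>. exp (l * (\<Sum>t=1..n. X t \<omega>)))"
proof (rule integrable_bounded_borel)
  show "(\<lambda>\<omega>. exp (l * (\<Sum>t=1..n. X t \<omega>))) \<in> borel_measurable M"
    using assms(1) by measurable
  show "\<bar>exp (l * (\<Sum>t=1..n. X t \<omega>))\<bar> \<le> exp (\<bar>l\<bar> * n)" if "\<omega> \<in> space M" for \<omega>
    using exp_mult_sum_le[of n "\<lambda>t. X t \<omega>" l] assms(2) that by simp
qed

text \<open>Instead of a filtration, the martingale property is only required in the form actually
  used: each increment is orthogonal to the exponential of the preceding partial sum.\<close>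
lemma azuma_exp_moment_le:
  fixes X :: "nat \<Rightarrow> 'a \<Rightarrow> real"
  assumes meas: "\<And>t. t \<in> {1..n} \<Longrightarrow> X t \<in> borel_measurable M"
    and bounded: "\<And>t \<omega>. t \<in> {1..n} \<Longrightarrow> \<omega> \<in> space M \<Longrightarrow> \<bar>X t \<omega>\<bar> \<le> 1"
    and orth: "\<And>t l. t \<in> {1..n} \<Longrightarrow> (\<integral>\<omega>. exp (l * (\<Sum>s=1..t-1. X s \<omega>)) * X t \<omega> \<partial>M) = 0"
  shows "(\<integral>\<omega>. exp (l * (\<Sum>t=1..n. X t \<omega>)) \<partial>M) \<le> exp (l\<^sup>2 * n / 2)"
  using meas bounded orth
proof (induction n)
  case 0
  then show ?case by (simp add: prob_space)
next
  case (Suc n)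
  define E where "E \<omega> = exp (l * (\<Sum>t=1..n. X t \<omega>))" for \<omega>
  have E_int: "integrable M E"
    unfolding E_def using Suc.prems by (intro integrable_exp_bounded_sum) auto
  have EX_int: "integrable M (\<lambda>\<omega>. E \<omega> * X (Suc n) \<omega>)"
    using E_int Suc.prems(1,2) by (intro integrable_mult_abs_le_1) auto
  have "(\<integral>\<omega>. exp (l * (\<Sum>t=1..Suc n. X t \<omega>)) \<partial>M)
      \<le> (\<integral>\<omega>. cosh l * E \<omega> + sinh l * (E \<omega> * X (Suc n) \<omega>) \<partial>M)"
  proof (rule integral_mono)
    show "integrable M (\<lambda>\<omega>. exp (l * (\<Sum>t=1..Suc n. X t \<omega>)))"
      using Suc.prems(1,2) by (intro integrable_exp_bounded_sum) auto
    show "integrable M (\<lambda>\<omega>. cosh l * E \<omega> + sinh l * (E \<omega> * X (Suc n) \<omega>))"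
      using E_int EX_int by auto
    fix \<omega> assume "\<omega> \<in> space M"
    then have "exp (l * X (Suc n) \<omega>) \<le> cosh l + X (Suc n) \<omega> * sinh l"
      using Suc.prems(2) by (intro exp_le_cosh_plus_sinh) auto
    from mult_left_mono[OF this, of "E \<omega>"]
    show "exp (l * (\<Sum>t=1..Suc n. X t \<omega>)) \<le> cosh l * E \<omega> + sinh l * (E \<omega> * X (Suc n) \<omega>)"
      by (simp add: E_def distrib_left exp_add algebra_simps)
  qed
  also have "\<dots> = cosh l * (\<integral>\<omega>. E \<omega> \<partial>M)"
  proof -
    have "(\<integral>\<omega>. E \<omega> * X (Suc n) \<omega> \<partial>M) = 0"
      using Suc.prems(3)[of "Suc n" l] by (simp add: E_def)
    then show ?thesis using E_int EX_int by simp
  qed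
  also have "\<dots> \<le> exp (l\<^sup>2 / 2) * exp (l\<^sup>2 * n / 2)"
    using Suc by (intro mult_mono cosh_le_exp_square) (auto simp: E_def)
  also have "\<dots> = exp (l\<^sup>2 * Suc n / 2)"
    by (simp add: field_simps flip: exp_add)
  finally show ?case .
qed

lemma subgaussian_tail_le:
  assumes "S \<in> borel_measurable M"
    and "\<And>l. integrable M (\<lambda>\<omega>. exp (l * S \<omega>))"
    and "\<And>l. (\<integral>\<omega>. exp (l * S \<omega>) \<partial>M) \<le> exp (l\<^sup>2 * v / 2)"
    and "0 < v" "0 < \<epsilon>"
  shows "prob {\<omega>\<in>space M. \<epsilon> \<le> S \<omega>} \<le> exp (- \<epsilon>\<^sup>2 / (2 * v))"
proof -
  define l where "l = \<epsilon> / v"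
  have "0 < l" using assms by (simp add: l_def)
  then have "{\<omega>\<in>space M. \<epsilon> \<le> S \<omega>} = {\<omega>\<in>space M. exp (l * \<epsilon>) \<le> exp (l * S \<omega>)}"
    by auto
  also have "prob \<dots> \<le> (\<integral>\<omega>. exp (l * S \<omega>) \<partial>M) / exp (l * \<epsilon>)"
    using assms by (intro integral_Markov_inequality_measure[where A = "space M"]) auto
  also have "\<dots> \<le> exp (l\<^sup>2 * v / 2) / exp (l * \<epsilon>)"
    using assms by (intro divide_right_mono) auto
  also have "\<dots> = exp (- \<epsilon>\<^sup>2 / (2 * v))"
    using assms by (simp add: l_def power2_eq_square field_simps flip: exp_diff)
  finally show ?thesis .
qed

theorem azuma_hoeffding:
  fixes X :: "nat \<Rightarrow> 'a \<Rightarrow> real"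
  assumes meas: "\<And>t. t \<in> {1..n} \<Longrightarrow> X t \<in> borel_measurable M"
    and bounded: "\<And>t \<omega>. t \<in> {1..n} \<Longrightarrow> \<omega> \<in> space M \<Longrightarrow> \<bar>X t \<omega>\<bar> \<le> 1"
    and orth: "\<And>t l. t \<in> {1..n} \<Longrightarrow> (\<integral>\<omega>. exp (l * (\<Sum>s=1..t-1. X s \<omega>)) * X t \<omega> \<partial>M) = 0"
    and \<delta>: "0 < \<delta>" "\<delta> < 1"
  shows "1 - \<delta> \<le> prob {\<omega>\<in>space M. \<bar>\<Sum>t=1..n. X t \<omega>\<bar> \<le> sqrt (2 * n * ln (2 / \<delta>))}"
    (is "_ \<le> prob ?G")
proof (cases "n = 0")
  case True
  then show ?thesis using \<delta> by (simp add: prob_space)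
next
  case False
  define S where "S \<omega> = (\<Sum>t=1..n. X t \<omega>)" for \<omega>
  define \<epsilon> where "\<epsilon> = sqrt (2 * n * ln (2 / \<delta>))"
  have S_meas [measurable]: "S \<in> borel_measurable M"
    unfolding S_def using meas by measurable
  have "0 < ln (2 / \<delta>)" using \<delta> by simp
  then have "0 < \<epsilon>" and tail: "exp (- \<epsilon>\<^sup>2 / (2 * n)) = \<delta> / 2"
    using False \<delta> by (simp_all add: \<epsilon>_def exp_minus)
  have "prob {\<omega>\<in>space M. \<epsilon> \<le> s * S \<omega>} \<le> \<delta> / 2" if "s \<in> {-1, 1}" for s :: real
  proof -
    have "\<And>l. integrable M (\<lambda>\<omega>. exp (l * (s * S \<omega>)))"
      using integrable_exp_bounded_sum[OF meas bounded] by (simp add: S_def mult.assoc[symmetric])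
    moreover have "(\<integral>\<omega>. exp (l * (s * S \<omega>)) \<partial>M) \<le> exp (l\<^sup>2 * n / 2)" for l
      using azuma_exp_moment_le[where l = "l * s", OF meas bounded orth] that
      by (auto simp: S_def mult.assoc)
    ultimately show ?thesis
      using subgaussian_tail_le[of "\<lambda>\<omega>. s * S \<omega>" n \<epsilon>] False \<open>0 < \<epsilon>\<close> tail by simp
  qed
  from this[of 1] this[of "-1"]
  have "prob {\<omega>\<in>space M. \<epsilon> \<le> S \<omega>} + prob {\<omega>\<in>space M. \<epsilon> \<le> - S \<omega>} \<le> \<delta>" by simp
  moreover have "space M - ?G \<subseteq> {\<omega>\<in>space M. \<epsilon> \<le> S \<omega>} \<union> {\<omega>\<in>space M. \<epsilon> \<le> - S \<omega>}"
    by (auto simp: S_def \<epsilon>_def)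
  then have "prob (space M - ?G) \<le> prob {\<omega>\<in>space M. \<epsilon> \<le> S \<omega>} + prob {\<omega>\<in>space M. \<epsilon> \<le> - S \<omega>}"
    by (intro order.trans[OF finite_measure_mono measure_Un_le]) auto
  moreover have "?G \<in> events"
    unfolding S_def[symmetric] \<epsilon>_def[symmetric] by measurable
  ultimately show ?thesis by (simp add: prob_compl)
qed

end

section \<open>Generated \<sigma>-algebras and conditional probabilities\<close>

definition gen_sigma_measure :: "'a measure \<Rightarrow> ('a \<Rightarrow> real) set \<Rightarrow> 'a measure" where
  "gen_sigma_measure P Xs = sigma (space P) (\<Union>X\<in>Xs. {X -` B \<inter> space P | B. B \<in> sets borel})"

lemma space_gen_sigma_measure [simp]: "space (gen_sigma_measure P Xs) = space P"
  unfolding gen_sigma_measure_def by (subst space_measure_of) auto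

lemma sets_gen_sigma_measure [simp]: "sets (gen_sigma_measure P Xs) = gen_sigma P Xs"
  unfolding gen_sigma_measure_def gen_sigma_def by (subst sets_measure_of) auto

lemma gen_sigma_measure_measurable:
  assumes "X \<in> Xs"
  shows "X \<in> borel_measurable (gen_sigma_measure P Xs)"
proof (rule measurableI)
  fix B :: "real set" assume "B \<in> sets borel"
  then have "X -` B \<inter> space P \<in> (\<Union>X\<in>Xs. {X -` B \<inter> space P | B. B \<in> sets borel})"
    using assms by blast
  then show "X -` B \<inter> space (gen_sigma_measure P Xs) \<in> sets (gen_sigma_measure P Xs)"
    unfolding sets_gen_sigma_measure space_gen_sigma_measure gen_sigma_def
    by (rule sigma_sets.Basic)
qed simp

lemma subalgebra_gen_sigma_measure:
  assumes "\<And>X. X \<in> Xs \<Longrightarrow> X \<in> borel_measurable P"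
  shows "subalgebra P (gen_sigma_measure P Xs)"
  unfolding subalgebra_def
proof
  have "(\<Union>X\<in>Xs. {X -` B \<inter> space P | B. B \<in> sets borel}) \<subseteq> sets P"
    using assms measurable_sets by blast
  then show "sets (gen_sigma_measure P Xs) \<subseteq> sets P"
    unfolding sets_gen_sigma_measure gen_sigma_def by (rule sets.sigma_sets_subset)
qed simp

text \<open>The hypothesis \<open>cond_prob\<close> says that \<open>h\<close> is a version of \<open>P(D = 1 | F)\<close>.\<close>
lemma (in prob_space) integral_mult_eq_of_cond_prob:
  assumes F: "subalgebra M F"
    and Y: "Y \<in> borel_measurable F" "\<And>\<omega>. \<omega> \<in> space M \<Longrightarrow> \<bar>Y \<omega>\<bar> \<le> B"
    and D: "D \<in> borel_measurable M" "\<And>\<omega>. \<omega> \<in> space M \<Longrightarrow> D \<omega> \<in> {0, 1}"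
    and h: "h \<in> borel_measurable F" "integrable M h"
    and cond_prob: "\<And>A. A \<in> sets F \<Longrightarrow>
      prob ({\<omega>\<in>space M. D \<omega> = 1} \<inter> A) = (\<integral>\<omega>. indicator A \<omega> * h \<omega> \<partial>M)"
  shows "(\<integral>\<omega>. Y \<omega> * D \<omega> \<partial>M) = (\<integral>\<omega>. Y \<omega> * h \<omega> \<partial>M)"
proof -
  interpret finite_measure_subalgebra M F by unfold_locales (rule F)
  have [measurable]: "Y \<in> borel_measurable M" "h \<in> borel_measurable M"
    using measurable_from_subalg[OF F] Y(1) h(1) by auto
  have "AE \<omega> in M. real_cond_exp M F D \<omega> = h \<omega>"
  proof (rule real_cond_exp_charact)
    fix A assume A: "A \<in> sets F"
    then have "A \<in> events" using F by (auto simp: subalgebra_def)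
    then have "(\<integral>\<omega>\<in>A. D \<omega> \<partial>M) = (\<integral>\<omega>. indicator ({\<omega>\<in>space M. D \<omega> = 1} \<inter> A) \<omega> \<partial>M)"
      unfolding set_lebesgue_integral_def
      by (intro Bochner_Integration.integral_cong) (use D(2) in \<open>auto simp: indicator_def\<close>)
    also have "\<dots> = (\<integral>\<omega>\<in>A. h \<omega> \<partial>M)"
      using cond_prob[OF A] \<open>A \<in> events\<close> D(1) by (simp add: set_lebesgue_integral_def)
    finally show "(\<integral>\<omega>\<in>A. D \<omega> \<partial>M) = (\<integral>\<omega>\<in>A. h \<omega> \<partial>M)" .
  next
    show "integrable M D"
      by (intro integrable_bounded_borel[where B = 1] D(1)) (use D(2) in fastforce)
  qed (use h in auto)
  moreover have "integrable M (\<lambda>\<omega>. Y \<omega> * D \<omega>)"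
    using Y(2) D by (intro integrable_mult_abs_le_1 integrable_bounded_borel) force+
  then have "(\<integral>\<omega>. Y \<omega> * D \<omega> \<partial>M) = (\<integral>\<omega>. Y \<omega> * real_cond_exp M F D \<omega> \<partial>M)"
    using real_cond_exp_intg(2)[OF _ Y(1) D(1)] by simp
  ultimately show ?thesis
    by (auto intro!: integral_cong_AE borel_measurable_cond_exp2)
qed

section \<open>The patient model\<close>

lemma action_setD:
  assumes "v \<in> action_set M"
  shows action_set_01: "v j \<in> {0, 1}"
    and action_set_vanishes: "M \<le> j \<Longrightarrow> v j = 0"
    and action_set_single_support: "v j \<noteq> 0 \<Longrightarrow> v j' \<noteq> 0 \<Longrightarrow> j = j'"
proof -
  have v: "\<forall>j. v j \<in> {0, 1}" "\<forall>j\<ge>M. v j = 0" "card {j. v j \<noteq> 0} \<le> 1"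
    using assms unfolding action_set_def by auto
  show "v j \<in> {0, 1}" "M \<le> j \<Longrightarrow> v j = 0" using v by auto
  have "{j. v j \<noteq> 0} \<subseteq> {..<M}"
    using v(2) not_le by auto
  then have "finite {j. v j \<noteq> 0}"
    by (rule finite_subset) simp
  then show "v j \<noteq> 0 \<Longrightarrow> v j' \<noteq> 0 \<Longrightarrow> j = j'"
    using v(3) card_le_Suc0_iff_eq by auto
qed

lemma abs_sum_single_support_le:
  fixes b v :: "nat \<Rightarrow> real"
  assumes v01: "\<And>j. j < M \<Longrightarrow> v j \<in> {0, 1}"
    and single: "\<And>j j'. j < M \<Longrightarrow> j' < M \<Longrightarrow> v j \<noteq> 0 \<Longrightarrow> v j' \<noteq> 0 \<Longrightarrow> j = j'"
    and b: "\<And>j. j < M \<Longrightarrow> \<bar>b j\<bar> \<le> B" and "0 \<le> B"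
  shows "\<bar>\<Sum>j<M. b j * v j\<bar> \<le> B"
proof (cases "\<exists>j0<M. v j0 \<noteq> 0")
  case True
  then obtain j0 where j0: "j0 < M" "v j0 \<noteq> 0" by blast
  have "(\<Sum>j<M. b j * v j) = b j0 * v j0 + (\<Sum>j\<in>{..<M} - {j0}. b j * v j)"
    using j0 by (intro sum.remove) auto
  also have "(\<Sum>j\<in>{..<M} - {j0}. b j * v j) = 0"
    using single j0 by (intro sum.neutral) auto
  finally have "(\<Sum>j<M. b j * v j) = b j0 * v j0" by simp
  moreover have "v j0 = 1" using j0 v01 by blast
  ultimately show ?thesis using j0 b by simp
next
  case False
  then show ?thesis using \<open>0 \<le> B\<close> by simp
qed

lemma state_bound_step:
  fixes a abar z \<beta> \<gamma> \<omega> bb cb wb :: real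
  defines "K \<equiv> (bb + cb + wb) / (1 - abar)"
  assumes "\<bar>z\<bar> \<le> K" "0 \<le> a" "a \<le> abar" "abar < 1"
    and "\<bar>\<beta>\<bar> \<le> bb" "\<bar>\<gamma>\<bar> \<le> cb" "\<bar>\<omega>\<bar> \<le> wb"
  shows "\<bar>a * z + \<beta> + \<gamma> + \<omega>\<bar> \<le> K"
proof -
  have "\<bar>a * z\<bar> \<le> abar * K"
    using assms(2-4) abs_ge_zero[of z] by (simp add: abs_mult mult_mono)
  then have "\<bar>a * z + \<beta> + \<gamma> + \<omega>\<bar> \<le> abar * K + (bb + cb + wb)"
    using assms(6-8) by linarith
  also have "\<dots> = K" using \<open>abar < 1\<close> unfolding K_def by (simp add: field_simps)
  finally show ?thesis .
qed

lemma measurable_indicator_eq_basis_vec: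
  fixes v :: "'a \<Rightarrow> nat \<Rightarrow> real"
  assumes meas: "\<And>j. j < M \<Longrightarrow> (\<lambda>\<omega>. v \<omega> j) \<in> borel_measurable N"
    and vanishes: "\<And>\<omega> j. \<omega> \<in> space N \<Longrightarrow> M \<le> j \<Longrightarrow> v \<omega> j = 0" and "i < M"
  shows "(\<lambda>\<omega>. if v \<omega> = basis_vec i then 1 else 0 :: real) \<in> borel_measurable N"
proof -
  have coordinates: "v \<omega> = basis_vec i \<longleftrightarrow> (\<forall>j\<in>{..<M}. v \<omega> j = basis_vec i j)"
    if "\<omega> \<in> space N" for \<omega>
  proof -
    have "v \<omega> j = basis_vec i j" if "M \<le> j" for j
      using vanishes[OF \<open>\<omega> \<in> space N\<close> that] that \<open>i < M\<close> by (simp add: basis_vec_def)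
    then show ?thesis by (auto simp: fun_eq_iff) (meson lessThan_iff not_le)
  qed
  have "Measurable.pred N (\<lambda>\<omega>. \<forall>j\<in>{..<M}. v \<omega> j = basis_vec i j)"
    using meas by (intro pred_intros_finite) simp_all
  then have "(\<lambda>\<omega>. if \<forall>j\<in>{..<M}. v \<omega> j = basis_vec i j then 1 else 0 :: real) \<in> borel_measurable N"
    by measurable
  then show ?thesis by (subst measurable_cong[OF if_cong[OF coordinates refl refl]])
qed

lemma hist_vars_memberI:
  shows "1 \<le> s \<Longrightarrow> s \<le> t \<Longrightarrow> x s \<in> hist_vars M x u d w t"
    and "1 \<le> s \<Longrightarrow> s \<le> t \<Longrightarrow> j < M \<Longrightarrow> (\<lambda>\<omega>. u s \<omega> j) \<in> hist_vars M x u d w t"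
    and "1 \<le> s \<Longrightarrow> s \<le> t \<Longrightarrow> j < M \<Longrightarrow> (\<lambda>\<omega>. d s \<omega> j) \<in> hist_vars M x u d w t"
  unfolding hist_vars_def by blast+

locale patient_model = prob_space P for P :: "'a measure" +
  fixes M :: nat and a abar bbar cbar wbar :: real and b c mus :: "nat \<Rightarrow> real"
    and x w :: "nat \<Rightarrow> 'a \<Rightarrow> real" and u d :: "nat \<Rightarrow> 'a \<Rightarrow> nat \<Rightarrow> real"
  assumes M_pos: "1 \<le> M"
    and a_bounds: "0 \<le> a" "a \<le> abar" "abar < 1"
    and b_bound: "\<And>j. j < M \<Longrightarrow> \<bar>b j\<bar> \<le> bbar"
    and c_bound: "\<And>j. j < M \<Longrightarrow> \<bar>c j\<bar> \<le> cbar"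
    and x_measurable: "\<And>t. 1 \<le> t \<Longrightarrow> x t \<in> borel_measurable P"
    and w_measurable: "\<And>t. 1 \<le> t \<Longrightarrow> w t \<in> borel_measurable P"
    and u_measurable: "\<And>t j. 1 \<le> t \<Longrightarrow> (\<lambda>\<omega>. u t \<omega> j) \<in> borel_measurable P"
    and d_measurable: "\<And>t j. 1 \<le> t \<Longrightarrow> (\<lambda>\<omega>. d t \<omega> j) \<in> borel_measurable P"
    and actions: "\<And>t \<omega>. 1 \<le> t \<Longrightarrow> \<omega> \<in> space P \<Longrightarrow> u t \<omega> \<in> action_set M"
    and d_01: "\<And>t \<omega> j. 1 \<le> t \<Longrightarrow> \<omega> \<in> space P \<Longrightarrow> j < M \<Longrightarrow> d t \<omega> j \<in> {0, 1}"
    and dynamics: "\<And>t \<omega>. 1 \<le> t \<Longrightarrow> \<omega> \<in> space P \<Longrightarrow> x (Suc t) \<omega> =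
      a * x t \<omega> + (\<Sum>j<M. b j * u t \<omega> j) + (\<Sum>j<M. c j * d t \<omega> j) + w t \<omega>"
    and initial_state: "distr P borel (x 1) = distr P borel (w 1)"
    and noise_bounded: "0 \<le> wbar" "\<And>t. 1 \<le> t \<Longrightarrow> AE \<omega> in P. \<bar>w t \<omega>\<bar> \<le> wbar"
    and adherence: "\<And>t j A. 1 \<le> t \<Longrightarrow> j < M \<Longrightarrow>
      A \<in> gen_sigma P (past_vars M x u d w t \<union> {(\<lambda>\<omega>. u t \<omega> l) | l. l < M}) \<Longrightarrow>
      prob ({\<omega>\<in>space P. d t \<omega> j = 1} \<inter> A) = (\<integral>\<omega>. indicator A \<omega> * (u t \<omega> j * sigmoid (x t \<omega> + mus j)) \<partial>P)"
begin

text \<open>\<open>history t\<close> is \<open>\<sigma>(\<F>\<^sub>t\<^sub>-\<^sub>1, x\<^sub>t, u\<^sub>t)\<close>, the information available when the adherence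
  \<open>d\<^sub>t\<close> is drawn.\<close>
definition history :: "nat \<Rightarrow> 'a measure" where
  "history t = gen_sigma_measure P (past_vars M x u d w t \<union> {(\<lambda>\<omega>. u t \<omega> l) | l. l < M})"

definition state_bound :: real where
  "state_bound = (bbar + cbar + wbar) / (1 - abar)"

definition treated :: "nat \<Rightarrow> nat \<Rightarrow> 'a \<Rightarrow> real" where
  "treated i t \<omega> = (if u t \<omega> = basis_vec i then 1 else 0)"

definition score_term :: "nat \<Rightarrow> nat \<Rightarrow> 'a \<Rightarrow> real" where
  "score_term i t \<omega> = treated i t \<omega> * (d t \<omega> i - sigmoid (x t \<omega> + mus i))"

lemma sets_history: "sets (history t) = gen_sigma P (past_vars M x u d w t \<union> {(\<lambda>\<omega>. u t \<omega> l) | l. l < M})"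
  by (simp add: history_def)

lemma space_history [simp]: "space (history t) = space P"
  by (simp add: history_def)

lemma subalgebra_history: "1 \<le> t \<Longrightarrow> subalgebra P (history t)"
  unfolding history_def past_vars_def hist_vars_def
  by (intro subalgebra_gen_sigma_measure)
    (auto intro: x_measurable w_measurable u_measurable d_measurable)

lemma history_measurable_generator:
  assumes "X \<in> hist_vars M x u d w (t - 1) \<or> X = x t \<or> (\<exists>l<M. X = (\<lambda>\<omega>. u t \<omega> l))"
  shows "X \<in> borel_measurable (history t)"
  unfolding history_def past_vars_def using assms by (intro gen_sigma_measure_measurable) blast

lemma history_measurable_x:
  assumes "1 \<le> s" "s \<le> t"
  shows "x s \<in> borel_measurable (history t)"
proof (cases "s = t")
  case False
  then show ?thesis
    using assms by (intro history_measurable_generator disjI1 hist_vars_memberI) auto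
qed (simp add: history_measurable_generator)

lemma history_measurable_u:
  assumes "1 \<le> s" "s \<le> t" "j < M"
  shows "(\<lambda>\<omega>. u s \<omega> j) \<in> borel_measurable (history t)"
proof (cases "s = t")
  case False
  then show ?thesis
    using assms by (intro history_measurable_generator disjI1 hist_vars_memberI) auto
qed (use assms in \<open>auto intro: history_measurable_generator\<close>)

lemma history_measurable_d:
  "1 \<le> s \<Longrightarrow> s < t \<Longrightarrow> j < M \<Longrightarrow> (\<lambda>\<omega>. d s \<omega> j) \<in> borel_measurable (history t)"
  by (intro history_measurable_generator disjI1 hist_vars_memberI) auto

lemma u_vanishes: "1 \<le> t \<Longrightarrow> \<omega> \<in> space P \<Longrightarrow> M \<le> j \<Longrightarrow> u t \<omega> j = 0"
  using action_set_vanishes[OF actions] .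

lemma treated_measurable_history:
  "1 \<le> s \<Longrightarrow> s \<le> t \<Longrightarrow> i < M \<Longrightarrow> treated i s \<in> borel_measurable (history t)"
  unfolding treated_def[abs_def]
  by (intro measurable_indicator_eq_basis_vec[where M = M] history_measurable_u)
    (auto intro: u_vanishes)

lemma score_term_measurable_history:
  assumes "1 \<le> s" "s < t" "i < M"
  shows "score_term i s \<in> borel_measurable (history t)"
proof -
  note [measurable] = treated_measurable_history[OF assms(1) less_imp_le[OF assms(2)] assms(3)]
    history_measurable_x[OF assms(1) less_imp_le[OF assms(2)]] history_measurable_d[OF assms]
  show ?thesis unfolding score_term_def[abs_def] using assms by measurable
qed

lemma treated_measurable: "1 \<le> t \<Longrightarrow> i < M \<Longrightarrow> treated i t \<in> borel_measurable P"
  using measurable_from_subalg[OF subalgebra_history treated_measurable_history] by blast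

lemma score_term_measurable: "1 \<le> t \<Longrightarrow> i < M \<Longrightarrow> score_term i t \<in> borel_measurable P"
  using measurable_from_subalg[OF subalgebra_history score_term_measurable_history, of "Suc t"]
  by simp

lemma treated_01: "treated i t \<omega> \<in> {0, 1}"
  by (simp add: treated_def)

lemma treated_imp_action: "treated i t \<omega> \<noteq> 0 \<Longrightarrow> u t \<omega> i = 1"
  by (simp add: treated_def basis_vec_def split: if_splits)

lemma abs_score_term_le_1:
  assumes "1 \<le> t" "\<omega> \<in> space P" "i < M"
  shows "\<bar>score_term i t \<omega>\<bar> \<le> 1"
proof -
  have "\<bar>d t \<omega> i - sigmoid (x t \<omega> + mus i)\<bar> \<le> 1"
    using d_01[OF assms] sigmoid_pos[of "x t \<omega> + mus i"] sigmoid_less_1[of "x t \<omega> + mus i"]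
    by auto
  then show ?thesis using treated_01[of i t \<omega>] by (auto simp: score_term_def)
qed

text \<open>By the adherence hypothesis, \<open>u\<^sub>t\<^sup>j \<sigma>(x\<^sub>t + \<mu>\<^sup>*\<^sub>j)\<close> is the conditional mean of \<open>d\<^sub>t\<^sup>j\<close> given
  the history.\<close>
lemma adherence_residual_orthogonal:
  assumes t: "1 \<le> t" and j: "j < M"
    and Y: "Y \<in> borel_measurable (history t)" "\<And>\<omega>. \<omega> \<in> space P \<Longrightarrow> \<bar>Y \<omega>\<bar> \<le> B"
  shows "(\<integral>\<omega>. Y \<omega> * (d t \<omega> j - u t \<omega> j * sigmoid (x t \<omega> + mus j)) \<partial>P) = 0"
proof -
  define h where "h \<omega> = u t \<omega> j * sigmoid (x t \<omega> + mus j)" for \<omega>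
  have h_meas: "h \<in> borel_measurable (history t)"
  proof -
    note [measurable] = history_measurable_u[OF t order_refl j] history_measurable_x[OF t order_refl]
    show ?thesis unfolding h_def[abs_def] by measurable
  qed
  have h_bound: "\<bar>h \<omega>\<bar> \<le> 1" if "\<omega> \<in> space P" for \<omega>
  proof -
    have "u t \<omega> j = 0 \<or> u t \<omega> j = 1" using action_set_01[OF actions[OF t that]] by simp
    then show ?thesis
      using sigmoid_pos[of "x t \<omega> + mus j"] sigmoid_less_1[of "x t \<omega> + mus j"]
      by (auto simp: h_def)
  qed
  have [measurable]: "Y \<in> borel_measurable P" "h \<in> borel_measurable P"
    using measurable_from_subalg[OF subalgebra_history[OF t]] Y(1) h_meas by auto
  have swap: "(\<integral>\<omega>. Y \<omega> * d t \<omega> j \<partial>P) = (\<integral>\<omega>. Y \<omega> * h \<omega> \<partial>P)"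
  proof (rule integral_mult_eq_of_cond_prob[OF subalgebra_history[OF t] Y])
    show "(\<lambda>\<omega>. d t \<omega> j) \<in> borel_measurable P" using d_measurable[OF t] .
    show "d t \<omega> j \<in> {0, 1}" if "\<omega> \<in> space P" for \<omega> using d_01[OF t that j] .
    show "integrable P h" using h_bound by (intro integrable_bounded_borel) auto
    show "prob ({\<omega>\<in>space P. d t \<omega> j = 1} \<inter> A) = (\<integral>\<omega>. indicator A \<omega> * h \<omega> \<partial>P)"
      if "A \<in> sets (history t)" for A
      using adherence[OF t j] that by (simp add: sets_history h_def)
  qed (use h_meas in auto)
  have "integrable P Y" using Y(2) by (intro integrable_bounded_borel) auto
  moreover have "\<bar>d t \<omega> j\<bar> \<le> 1" if "\<omega> \<in> space P" for \<omega>
    using d_01[OF t that j] by auto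
  ultimately have "integrable P (\<lambda>\<omega>. Y \<omega> * d t \<omega> j)" "integrable P (\<lambda>\<omega>. Y \<omega> * h \<omega>)"
    using d_measurable[OF t] h_bound by (auto intro!: integrable_mult_abs_le_1)
  then show ?thesis
    using swap by (simp add: right_diff_distrib h_def[symmetric])
qed

lemma score_term_orthogonal:
  assumes t: "1 \<le> t" and i: "i < M"
  shows "(\<integral>\<omega>. exp (l * (\<Sum>s=1..t-1. score_term i s \<omega>)) * score_term i t \<omega> \<partial>P) = 0"
proof -
  define Y where "Y \<omega> = exp (l * (\<Sum>s=1..t-1. score_term i s \<omega>)) * treated i t \<omega>" for \<omega>
  have Y_meas: "Y \<in> borel_measurable (history t)"
  proof -
    have [measurable]: "(\<lambda>\<omega>. \<Sum>s=1..t-1. score_term i s \<omega>) \<in> borel_measurable (history t)"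
      using i by (intro borel_measurable_sum score_term_measurable_history) auto
    note [measurable] = treated_measurable_history[OF t order_refl i]
    show ?thesis unfolding Y_def[abs_def] by measurable
  qed
  have Y_bound: "\<bar>Y \<omega>\<bar> \<le> exp (\<bar>l\<bar> * (t - 1))" if "\<omega> \<in> space P" for \<omega>
  proof -
    have "exp (l * (\<Sum>s=1..t-1. score_term i s \<omega>)) \<le> exp (\<bar>l\<bar> * (t - 1))"
      using that i by (intro exp_mult_sum_le abs_score_term_le_1) auto
    then show ?thesis using treated_01[of i t \<omega>] by (auto simp: Y_def)
  qed
  have "exp (l * (\<Sum>s=1..t-1. score_term i s \<omega>)) * score_term i t \<omega> =
      Y \<omega> * (d t \<omega> i - u t \<omega> i * sigmoid (x t \<omega> + mus i))" for \<omega>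
    using treated_01[of i t \<omega>] treated_imp_action[of i t \<omega>]
    by (cases "treated i t \<omega> = 0") (auto simp: Y_def score_term_def)
  then show ?thesis
    using adherence_residual_orthogonal[OF t i Y_meas Y_bound] by simp
qed

lemma score_concentration:
  assumes "i < M" "0 < \<delta>" "\<delta> < 1"
  shows "1 - \<delta> \<le> prob {\<omega>\<in>space P. \<bar>\<Sum>t=1..T. score_term i t \<omega>\<bar> \<le> sqrt (2 * real T * ln (2 / \<delta>))}"
proof (rule azuma_hoeffding)
  fix t assume "t \<in> {1..T}"
  then have "1 \<le> t" by simp
  show "score_term i t \<in> borel_measurable P"
    using score_term_measurable[OF \<open>1 \<le> t\<close> assms(1)] .
  show "\<bar>score_term i t \<omega>\<bar> \<le> 1" if "\<omega> \<in> space P" for \<omega>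
    using abs_score_term_le_1[OF \<open>1 \<le> t\<close> that assms(1)] .
  show "(\<integral>\<omega>. exp (l * (\<Sum>s=1..t-1. score_term i s \<omega>)) * score_term i t \<omega> \<partial>P) = 0" for l
    using score_term_orthogonal[OF \<open>1 \<le> t\<close> assms(1)] .
qed (use assms in auto)

lemma AE_adherent_imp_treated: "AE \<omega> in P. \<forall>t\<ge>1. \<forall>j<M. d t \<omega> j = 1 \<longrightarrow> u t \<omega> j = 1"
proof -
  have "AE \<omega> in P. \<forall>j\<in>{..<M}. d t \<omega> j = 1 \<longrightarrow> u t \<omega> j = 1" if t: "t \<in> {1..}" for t
  proof (rule AE_finite_allI)
    fix j assume "j \<in> {..<M}"
    then have t: "1 \<le> t" and j: "j < M" using t by auto
    define A where "A = {\<omega>\<in>space P. u t \<omega> j = 0}"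
    note [measurable] = history_measurable_u[OF t order_refl j]
    have "{\<omega>\<in>space (history t). u t \<omega> j = 0} \<in> sets (history t)" by measurable
    then have "A \<in> sets (history t)" by (simp add: A_def)
    then have "prob ({\<omega>\<in>space P. d t \<omega> j = 1} \<inter> A)
        = (\<integral>\<omega>. indicator A \<omega> * (u t \<omega> j * sigmoid (x t \<omega> + mus j)) \<partial>P)"
      using adherence[OF t j] by (simp add: sets_history)
    also have "\<dots> = 0"
    proof -
      have "(\<lambda>\<omega>. indicator A \<omega> * (u t \<omega> j * sigmoid (x t \<omega> + mus j)) :: real) = (\<lambda>_. 0)"
        by (simp add: A_def indicator_def fun_eq_iff)
      then show ?thesis by (simp only:) simp
    qed
    moreover have "{\<omega>\<in>space P. d t \<omega> j = 1} \<inter> A \<in> events"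
      using d_measurable[OF t] u_measurable[OF t] unfolding A_def by measurable
    ultimately have "AE \<omega> in P. \<omega> \<notin> {\<omega>\<in>space P. d t \<omega> j = 1} \<inter> A"
      by (simp add: prob_eq_0)
    then show "AE \<omega> in P. d t \<omega> j = 1 \<longrightarrow> u t \<omega> j = 1"
      using AE_space by eventually_elim (use action_set_01[OF actions[OF t]] in \<open>auto simp: A_def\<close>)
  qed simp
  then have "AE \<omega> in P. \<forall>t\<in>{1..}. \<forall>j\<in>{..<M}. d t \<omega> j = 1 \<longrightarrow> u t \<omega> j = 1"
    by (rule AE_ball_countable') (simp_all add: countableI_type)
  then show ?thesis by (simp add: Ball_def)
qed

lemma AE_initial_state_bounded: "AE \<omega> in P. \<bar>x 1 \<omega>\<bar> \<le> wbar"
proof -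
  have bounded: "{z \<in> space borel. \<bar>z\<bar> \<le> wbar} \<in> sets (borel :: real measure)"
    by measurable
  have "AE z in distr P borel (w 1). \<bar>z\<bar> \<le> wbar"
    using noise_bounded(2)[of 1] AE_distr_iff[OF w_measurable bounded] by simp
  then have "AE z in distr P borel (x 1). \<bar>z\<bar> \<le> wbar"
    unfolding initial_state .
  then show ?thesis using AE_distr_iff[OF x_measurable bounded] by simp
qed

lemma coefficient_bounds_nonneg: "0 \<le> bbar" "0 \<le> cbar"
  using b_bound[of 0] c_bound[of 0] M_pos by (auto intro: order_trans[OF abs_ge_zero])

lemma noise_le_state_bound: "wbar \<le> state_bound"
proof -
  note coefficient_bounds_nonneg
  moreover have "0 \<le> wbar * abar" using noise_bounded(1) a_bounds by simp
  ultimately show ?thesis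
    using a_bounds unfolding state_bound_def by (simp add: pos_le_divide_eq algebra_simps)
qed

lemma state_bound_Suc:
  assumes t: "1 \<le> t" and \<omega>: "\<omega> \<in> space P"
    and "\<bar>x t \<omega>\<bar> \<le> state_bound" "\<bar>w t \<omega>\<bar> \<le> wbar"
    and adherent: "\<forall>j<M. d t \<omega> j = 1 \<longrightarrow> u t \<omega> j = 1"
  shows "\<bar>x (Suc t) \<omega>\<bar> \<le> state_bound"
proof -
  note action = actions[OF t \<omega>]
  have "\<bar>\<Sum>j<M. b j * u t \<omega> j\<bar> \<le> bbar"
    using action_set_01[OF action] action_set_single_support[OF action] b_bound coefficient_bounds_nonneg(1)
    by (intro abs_sum_single_support_le) auto
  moreover have "\<bar>\<Sum>j<M. c j * d t \<omega> j\<bar> \<le> cbar"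
  proof (rule abs_sum_single_support_le[OF _ _ c_bound coefficient_bounds_nonneg(2)])
    show d01: "d t \<omega> j \<in> {0, 1}" if "j < M" for j using d_01[OF t \<omega> that] .
    show "j = j'" if "j < M" "j' < M" "d t \<omega> j \<noteq> 0" "d t \<omega> j' \<noteq> 0" for j j'
      using that d01 adherent action_set_single_support[OF action, of j j'] by fastforce
  qed
  ultimately show ?thesis
    using assms a_bounds noise_bounded(1) dynamics[OF t \<omega>]
    unfolding state_bound_def by (auto intro: state_bound_step)
qed

lemma AE_state_bounded: "AE \<omega> in P. \<forall>t\<ge>1. \<bar>x t \<omega>\<bar> \<le> state_bound"
proof -
  have "AE \<omega> in P. \<forall>t\<in>{1..}. \<bar>w t \<omega>\<bar> \<le> wbar"
    using noise_bounded(2) by (intro AE_ball_countable') (auto intro: countableI_type)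
  then show ?thesis
    using AE_initial_state_bounded AE_adherent_imp_treated AE_space
  proof eventually_elim
    case (elim \<omega>)
    show ?case
    proof (intro allI impI)
      fix t :: nat assume "1 \<le> t"
      then show "\<bar>x t \<omega>\<bar> \<le> state_bound"
      proof (induction t rule: nat_induct_at_least)
        case base
        then show ?case using elim noise_le_state_bound by simp
      next
        case (Suc t)
        then show ?case using elim by (intro state_bound_Suc) auto
      qed
    qed
  qed
qed

lemma loglik_eq_logistic_loglik:
  "loglik x u d T i \<omega> = logistic_loglik T (\<lambda>t. treated i t \<omega>) (\<lambda>t. d t \<omega> i) (\<lambda>t. x t \<omega>)"
  by (simp add: fun_eq_iff loglik_def logistic_loglik_def treated_def)

lemma count_treat_eq_sum_treated: "count_treat u T i \<omega> = (\<Sum>t=1..T. treated i t \<omega>)"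
  by (simp add: count_treat_def treated_def)

lemma count_treat_nonneg: "0 \<le> count_treat u T i \<omega>"
  unfolding count_treat_eq_sum_treated by (intro sum_nonneg) (simp add: treated_def)

lemma count_treat_measurable: "i < M \<Longrightarrow> count_treat u T i \<in> borel_measurable P"
  unfolding count_treat_eq_sum_treated[abs_def]
  by (intro borel_measurable_sum treated_measurable) auto

lemma logistic_score_measurable:
  assumes "i < M"
  shows "(\<lambda>\<omega>. logistic_score T (\<lambda>t. treated i t \<omega>) (\<lambda>t. d t \<omega> i) (\<lambda>t. x t \<omega>) q) \<in> borel_measurable P"
  unfolding logistic_score_def
proof (intro borel_measurable_sum)
  fix t assume "t \<in> {1..T}"
  then have t: "1 \<le> t" by simp
  note [measurable] = treated_measurable[OF t assms] x_measurable[OF t] d_measurable[OF t]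
  show "(\<lambda>\<omega>. treated i t \<omega> * (d t \<omega> i - sigmoid (x t \<omega> + q))) \<in> borel_measurable P"
    by measurable
qed

lemma mle_error_le_score:
  assumes mus: "\<bar>mus i\<bar> \<le> mubar" and mh: "mh \<in> {-mubar..mubar}"
    and argmax: "\<forall>m\<in>{-mubar..mubar}. loglik x u d T i \<omega> m \<le> loglik x u d T i \<omega> mh"
    and state: "\<forall>t\<ge>1. \<bar>x t \<omega>\<bar> \<le> state_bound"
  shows "count_treat u T i \<omega> * (sigmoid (- state_bound - mubar))\<^sup>2 * \<bar>mh - mus i\<bar>
    \<le> \<bar>\<Sum>t=1..T. score_term i t \<omega>\<bar>"
proof -
  have "logistic_score T (\<lambda>t. treated i t \<omega>) (\<lambda>t. d t \<omega> i) (\<lambda>t. x t \<omega>) (mus i)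
      = (\<Sum>t=1..T. score_term i t \<omega>)"
    by (simp add: logistic_score_def score_term_def)
  moreover have "(\<Sum>t=1..T. treated i t \<omega>) * (sigmoid (- state_bound - mubar))\<^sup>2 * \<bar>mh - mus i\<bar>
      \<le> \<bar>logistic_score T (\<lambda>t. treated i t \<omega>) (\<lambda>t. d t \<omega> i) (\<lambda>t. x t \<omega>) (mus i)\<bar>"
    by (rule logistic_mle_error_bound)
      (use mus mh argmax state in \<open>auto simp: treated_def loglik_eq_logistic_loglik\<close>)
  ultimately show ?thesis by (simp add: count_treat_eq_sum_treated)
qed

lemma mle_le_iff:
  assumes "count_treat u T i \<omega> \<noteq> 0" and mh: "mh \<in> {-mubar..mubar}"
    and argmax: "\<forall>m\<in>{-mubar..mubar}. loglik x u d T i \<omega> m \<le> loglik x u d T i \<omega> mh"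
  shows "mh \<le> q \<longleftrightarrow> mubar \<le> q \<or>
    (- mubar \<le> q \<and> logistic_score T (\<lambda>t. treated i t \<omega>) (\<lambda>t. d t \<omega> i) (\<lambda>t. x t \<omega>) q \<le> 0)"
proof -
  obtain t0 where t0: "t0 \<in> {1..T}" "treated i t0 \<omega> \<noteq> 0"
    using assms(1) unfolding count_treat_eq_sum_treated by (meson sum.neutral)
  then have "0 < treated i t0 \<omega>" by (simp add: treated_def split: if_splits)
  consider "mubar \<le> q" | "q < - mubar" | "- mubar \<le> q" "q < mubar" by linarith
  then show ?thesis
  proof cases
    case 3
    have "\<forall>t. 0 \<le> treated i t \<omega>" by (simp add: treated_def)
    from logistic_mle_le_iff[OF this t0(1) \<open>0 < treated i t0 \<omega>\<close> mh _ 3, of "\<lambda>t. d t \<omega> i" "\<lambda>t. x t \<omega>"]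
    show ?thesis using argmax 3 by (simp add: loglik_eq_logistic_loglik)
  qed (use mh in auto)
qed

text \<open>Where treatment \<open>i\<close> was never applied the maximiser is arbitrary and need not be
  measurable; elsewhere it is determined by the sign of the score.\<close>
lemma censored_mle_measurable:
  assumes i: "i < M"
    and mle: "\<forall>\<omega>\<in>space P. muhat \<omega> \<in> {-mubar..mubar} \<and>
      (\<forall>m\<in>{-mubar..mubar}. loglik x u d T i \<omega> m \<le> loglik x u d T i \<omega> (muhat \<omega>))"
  shows "(\<lambda>\<omega>. if count_treat u T i \<omega> = 0 then 0 else muhat \<omega>) \<in> borel_measurable P"
  unfolding borel_measurable_iff_le
proof
  fix q
  note [measurable] = count_treat_measurable[OF i] logistic_score_measurable[OF i, of T q]
  have "{\<omega>\<in>space P. (if count_treat u T i \<omega> = 0 then 0 else muhat \<omega>) \<le> q} =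
    {\<omega>\<in>space P. (count_treat u T i \<omega> = 0 \<and> 0 \<le> q) \<or> (count_treat u T i \<omega> \<noteq> 0 \<and> (mubar \<le> q \<or>
      (- mubar \<le> q \<and> logistic_score T (\<lambda>t. treated i t \<omega>) (\<lambda>t. d t \<omega> i) (\<lambda>t. x t \<omega>) q \<le> 0)))}"
  proof (intro Collect_cong conj_cong refl)
    fix \<omega> assume "\<omega> \<in> space P"
    then show "(if count_treat u T i \<omega> = 0 then 0 else muhat \<omega>) \<le> q \<longleftrightarrow>
      (count_treat u T i \<omega> = 0 \<and> 0 \<le> q) \<or> (count_treat u T i \<omega> \<noteq> 0 \<and> (mubar \<le> q \<or>
      (- mubar \<le> q \<and> logistic_score T (\<lambda>t. treated i t \<omega>) (\<lambda>t. d t \<omega> i) (\<lambda>t. x t \<omega>) q \<le> 0)))"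
      using mle mle_le_iff[of T i \<omega> "muhat \<omega>" mubar q] by auto
  qed
  also have "\<dots> \<in> events" by measurable
  finally show "{\<omega>\<in>space P. (if count_treat u T i \<omega> = 0 then 0 else muhat \<omega>) \<le> q} \<in> events" .
qed

lemma mle_error_event_measurable:
  assumes i: "i < M"
    and mle: "\<forall>\<omega>\<in>space P. muhat \<omega> \<in> {-mubar..mubar} \<and>
      (\<forall>m\<in>{-mubar..mubar}. loglik x u d T i \<omega> m \<le> loglik x u d T i \<omega> (muhat \<omega>))"
  shows "{\<omega>\<in>space P. count_treat u T i \<omega> = 0 \<or> \<bar>muhat \<omega> - mus i\<bar> \<le> \<epsilon> / (count_treat u T i \<omega> * p)}
    \<in> events"
proof -
  have "{\<omega>\<in>space P. count_treat u T i \<omega> = 0 \<or> \<bar>muhat \<omega> - mus i\<bar> \<le> \<epsilon> / (count_treat u T i \<omega> * p)}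
    = {\<omega>\<in>space P. count_treat u T i \<omega> = 0 \<or>
        \<bar>(if count_treat u T i \<omega> = 0 then 0 else muhat \<omega>) - mus i\<bar> \<le> \<epsilon> / (count_treat u T i \<omega> * p)}"
    by auto
  also have "\<dots> \<in> events"
    using count_treat_measurable[OF i] censored_mle_measurable[OF i mle] by measurable
  finally show ?thesis .
qed

lemma mle_error_le_of_score_le:
  assumes mus: "\<bar>mus i\<bar> \<le> mubar" and mh: "mh \<in> {-mubar..mubar}"
    and argmax: "\<forall>m\<in>{-mubar..mubar}. loglik x u d T i \<omega> m \<le> loglik x u d T i \<omega> mh"
    and state: "\<forall>t\<ge>1. \<bar>x t \<omega>\<bar> \<le> state_bound"
    and score: "\<bar>\<Sum>t=1..T. score_term i t \<omega>\<bar> \<le> \<epsilon>"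
    and N: "count_treat u T i \<omega> \<noteq> 0"
  shows "\<bar>mh - mus i\<bar> \<le> \<epsilon> / (count_treat u T i \<omega> * (sigmoid (- state_bound - mubar))\<^sup>2)"
proof -
  have "0 < count_treat u T i \<omega> * (sigmoid (- state_bound - mubar))\<^sup>2"
    using N count_treat_nonneg[of T i \<omega>] sigmoid_pos[of "- state_bound - mubar"] by simp
  moreover have "\<bar>mh - mus i\<bar> * (count_treat u T i \<omega> * (sigmoid (- state_bound - mubar))\<^sup>2) \<le> \<epsilon>"
    using mle_error_le_score[OF mus mh argmax state] score by (simp add: mult_ac)
  ultimately show ?thesis by (simp add: pos_le_divide_eq)
qed

theorem mle_confidence:
  assumes i: "i < M" and mus: "\<bar>mus i\<bar> \<le> mubar" and \<delta>: "0 < \<delta>" "\<delta> < 1"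
    and mle: "\<forall>\<omega>\<in>space P. muhat \<omega> \<in> {-mubar..mubar} \<and>
      (\<forall>m\<in>{-mubar..mubar}. loglik x u d T i \<omega> m \<le> loglik x u d T i \<omega> (muhat \<omega>))"
  shows "1 - \<delta> \<le> prob {\<omega>\<in>space P. count_treat u T i \<omega> = 0 \<or> \<bar>muhat \<omega> - mus i\<bar> \<le>
    sqrt (2 * real T * ln (2 / \<delta>)) / (count_treat u T i \<omega> * (sigmoid (- state_bound - mubar))\<^sup>2)}"
    (is "_ \<le> prob ?E")
proof -
  let ?G = "{\<omega>\<in>space P. \<bar>\<Sum>t=1..T. score_term i t \<omega>\<bar> \<le> sqrt (2 * real T * ln (2 / \<delta>))}"
  have "1 - \<delta> \<le> prob ?G"
    using score_concentration[OF i \<delta>] .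
  also have "prob ?G \<le> prob ?E"
  proof (rule finite_measure_mono_AE)
    show "AE \<omega> in P. \<omega> \<in> ?G \<longrightarrow> \<omega> \<in> ?E"
      using AE_state_bounded by eventually_elim (use mle mus in \<open>auto intro!: mle_error_le_of_score_le\<close>)
    show "?E \<in> events"
      using mle_error_event_measurable[OF i mle] .
  qed
  finally show ?thesis .
qed

end

theorem mainTheorem13:
  fixes P :: "'a measure" and M T k i :: nat
    and a abar bbar cbar wbar mubar ss2 sw2 r \<delta> :: real
    and b c mus :: "nat \<Rightarrow> real"
    and x w :: "nat \<Rightarrow> 'a \<Rightarrow> real"
    and u d :: "nat \<Rightarrow> 'a \<Rightarrow> nat \<Rightarrow> real"
    and muhat :: "'a \<Rightarrow> real"
  assumes P: "prob_space P"
    and M: "M \<ge> 1"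
    and a: "0 < abar" "abar < 1" "0 \<le> a" "a \<le> abar"
    and bc: "\<forall>j<M. \<bar>b j\<bar> \<le> bbar" "\<forall>j<M. \<bar>c j\<bar> \<le> cbar"
    and mu: "0 < mubar" "\<forall>j<M. \<bar>mus j\<bar> \<le> mubar"
    and meas: "\<forall>t\<ge>1. x t \<in> borel_measurable P \<and> w t \<in> borel_measurable P \<and>
                 (\<forall>j. (\<lambda>\<omega>. u t \<omega> j) \<in> borel_measurable P \<and> (\<lambda>\<omega>. d t \<omega> j) \<in> borel_measurable P)"
    and actions: "\<forall>t\<ge>1. \<forall>\<omega>\<in>space P. u t \<omega> \<in> action_set M"
    and d01: "\<forall>t\<ge>1. \<forall>\<omega>\<in>space P. \<forall>j<M. d t \<omega> j \<in> {0, 1}"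
    and dyn: "\<forall>t\<ge>1. \<forall>\<omega>\<in>space P. x (Suc t) \<omega> =
                 a * x t \<omega> + (\<Sum>j<M. b j * u t \<omega> j) + (\<Sum>j<M. c j * d t \<omega> j) + w t \<omega>"
    and x1: "distr P borel (x 1) = distr P borel (w 1)"
    and adherence: "\<forall>t\<ge>1. \<forall>j<M. \<forall>A \<in> gen_sigma P (past_vars M x u d w t \<union> {(\<lambda>\<omega>. u t \<omega> l) | l. l < M}).
                 measure P ({\<omega>\<in>space P. d t \<omega> j = 1} \<inter> A) =
                 (\<integral>\<omega>. indicator A \<omega> * (u t \<omega> j * sigmoid (x t \<omega> + mus j)) \<partial>P)"
    and noise_iid: "prob_space.indep_vars P (\<lambda>_. borel) w {1..}"
                   "\<forall>t\<ge>1. distr P borel (w t) = distr P borel (w 1)"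
    and noise_indep: "\<forall>t\<ge>1. prob_space.indep_set P
                 (gen_sigma P (past_vars M x u d w t \<union> {(\<lambda>\<omega>. u t \<omega> l) | l. l < M}
                                \<union> {(\<lambda>\<omega>. d t \<omega> l) | l. l < M}))
                 (gen_sigma P {w t})"
    and noise_sym: "\<forall>t\<ge>1. distr P borel (\<lambda>\<omega>. - w t \<omega>) = distr P borel (w t)"
    and noise_subg: "\<forall>t\<ge>1. \<forall>s::real. integrable P (\<lambda>\<omega>. exp (s * w t \<omega>)) \<and>
                 (\<integral>\<omega>. exp (s * w t \<omega>) \<partial>P) \<le> exp (s\<^sup>2 * ss2 / 2)"
    and noise_bdd: "0 < wbar" "\<forall>t\<ge>1. AE \<omega> in P. \<bar>w t \<omega>\<bar> \<le> wbar"
    and noise_dens: "\<forall>t\<ge>1. \<exists>f. distributed P lborel (w t) (\<lambda>z. ennreal (f z)) \<and>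
                 (\<forall>z. 0 \<le> f z) \<and> log_concave f"
    and noise_var: "0 < sw2" "\<forall>t\<ge>1. prob_space.variance P (w t) = sw2"
    and expl_params: "0 < r" "r \<le> 1" "k \<ge> 1"
    and exploratory: "\<exists>(eta :: nat \<Rightarrow> 'a \<Rightarrow> nat \<Rightarrow> real) (expl :: nat \<Rightarrow> 'a \<Rightarrow> bool).
          (\<forall>t\<ge>1. {\<omega>\<in>space P. expl t \<omega>} \<in> sets P \<and> (\<forall>\<omega>\<in>space P. eta t \<omega> \<in> action_set M) \<and>
             (\<forall>v\<in>action_set M. \<forall>A \<in> gen_sigma P (past_vars M x u d w t \<union> {(\<lambda>\<omega>. of_bool (expl t \<omega>))}).
                {\<omega>\<in>space P. eta t \<omega> = v} \<in> sets P \<and>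
                measure P ({\<omega>\<in>space P. eta t \<omega> = v} \<inter> A) = measure P A / real (card (action_set M))) \<and>
             (\<forall>\<omega>\<in>space P. expl t \<omega> \<longrightarrow> u t \<omega> = eta t \<omega>)) \<and>
          (AE \<omega> in P. \<forall>j::nat. real_of_int \<lceil>r * real k\<rceil> \<le> real (card {t \<in> {j+1..j+k}. expl t \<omega>}))"
    and i: "i < M"
    and \<delta>: "0 < \<delta>" "\<delta> < 1"
    and mle: "\<forall>\<omega>\<in>space P. muhat \<omega> \<in> {-mubar..mubar} \<and>
                 (\<forall>m\<in>{-mubar..mubar}. loglik x u d T i \<omega> m \<le> loglik x u d T i \<omega> (muhat \<omega>))"
  shows "measure P {\<omega>\<in>space P. count_treat u T i \<omega> = 0 \<or>
            \<bar>muhat \<omega> - mus i\<bar> \<le> sqrt (2 * real T * ln (2 / \<delta>)) /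
              (count_treat u T i \<omega> * (sigmoid (- ((bbar + cbar + wbar) / (1 - abar)) - mubar))\<^sup>2)}
         \<ge> 1 - \<delta>"
proof -
  interpret patient_model P M a abar bbar cbar wbar b c mus x w u d
    by (intro patient_model.intro patient_model_axioms.intro P)
      (use M a bc meas actions d01 dyn x1 adherence noise_bdd in auto)
  show ?thesis
    using mle_confidence[OF i _ \<delta> mle] mu(2) i unfolding state_bound_def by auto
qed

end
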